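(* Let $D$ be an integral domain and let $M$ be a torsion-free $D$-module which is a $w$-module. Then the following are equivalent: (1) $M$ is an SM-module; (2) $M$ is a $P$-SM-module for all prime $w$-ideals $P$ of $D$; (3) $M$ is an $\mathfrak{m}$-SM-module for all maximal $w$-ideals $\mathfrak{m}$ of $D$.
   Context: Let $K$ be the quotient field of $D$; $I_v=(I^{-1})^{-1}$ with $I^{-1}=\{a\in K\mid aI\subseteq D\}$; $\mathrm{GV}(D)$ is the set of finitely generated ideals $J$ with $J_v=D$. For a torsion-free module $N$, $N_w=\{x\in N\otimes K\mid xJ\subseteq N\text{ for some }J\in\mathrm{GV}(D)\}$; $N$ is a $w$-module if $N_w=N$; a $w$-ideal is an ideal that is a $w$-module; maximal $w$-ideals are proper $w$-ideals maximal among proper $w$-ideals. A $w$-module $M$ is an SM-module (strong Mori module) if it satisfies the ascending chain condition on $w$-submodules, equivalently every $w$-submodule $L$ is $w$-finite ($L=F_w$ for some finitely generated $F$). For a multiplicative set $S$, a submodule $N$ is $S$-$w$-finite if there exist $s\in S$ and a finitely generated submodule $F$ of $M$ with $Ns\subseteq F_w\subseteq N_w$, and $M$ is an $S$-SM-module if every $w$-submodule is $S$-$w$-finite. For a prime ideal $P$, $M$ is a $P$-SM-module if it is a $(D\setminus P)$-SM-module. *)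

theory Defs
  imports Complex_Main
begin

(* Setting: the field K is a type 'k; D :: 'k set is a subring whose quotient field is all of K.
   A torsion-free D-module M is represented as a D-submodule of a K-vector space V
   (scalar multiplication sc); then M \<otimes> K is identified with the K-span of M in V. *)

definition domain_with_qf :: "'k::field set \<Rightarrow> bool" where
  "domain_with_qf D \<longleftrightarrow> 0 \<in> D \<and> 1 \<in> D \<and>
     (\<forall>a\<in>D. \<forall>b\<in>D. a + b \<in> D \<and> a - b \<in> D \<and> a * b \<in> D) \<and>
     (\<forall>x. \<exists>a\<in>D. \<exists>b\<in>D. b \<noteq> 0 \<and> x = a / b)"

definition lspan :: "'k set \<Rightarrow> ('k \<Rightarrow> 'v::ab_group_add \<Rightarrow> 'v) \<Rightarrow> 'v set \<Rightarrow> 'v set" where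
  "lspan R sc S = {\<Sum>x\<in>F. sc (c x) x | F c. finite F \<and> F \<subseteq> S \<and> (\<forall>x\<in>F. c x \<in> R)}"

definition submodule :: "'k set \<Rightarrow> ('k \<Rightarrow> 'v::ab_group_add \<Rightarrow> 'v) \<Rightarrow> 'v set \<Rightarrow> bool" where
  "submodule D sc N \<longleftrightarrow> 0 \<in> N \<and> (\<forall>x\<in>N. \<forall>y\<in>N. x + y \<in> N) \<and> (\<forall>a\<in>D. \<forall>x\<in>N. sc a x \<in> N)"

definition is_ideal :: "'k::field set \<Rightarrow> 'k set \<Rightarrow> bool" where
  "is_ideal D I \<longleftrightarrow> I \<subseteq> D \<and> submodule D (*) I"

definition frac_inv :: "'k::field set \<Rightarrow> 'k set \<Rightarrow> 'k set" where
  "frac_inv D I = {a. \<forall>x\<in>I. a * x \<in> D}"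

definition v_closure :: "'k::field set \<Rightarrow> 'k set \<Rightarrow> 'k set" where
  "v_closure D I = frac_inv D (frac_inv D I)"

definition GV :: "'k::field set \<Rightarrow> 'k set set" where
  "GV D = {J. is_ideal D J \<and> (\<exists>F. finite F \<and> F \<subseteq> D \<and> J = lspan D (*) F) \<and> v_closure D J = D}"

definition w_closure :: "'k::field set \<Rightarrow> ('k \<Rightarrow> 'v::ab_group_add \<Rightarrow> 'v) \<Rightarrow> 'v set \<Rightarrow> 'v set" where
  "w_closure D sc N = {x \<in> lspan UNIV sc N. \<exists>J\<in>GV D. \<forall>j\<in>J. sc j x \<in> N}"

definition w_module :: "'k::field set \<Rightarrow> ('k \<Rightarrow> 'v::ab_group_add \<Rightarrow> 'v) \<Rightarrow> 'v set \<Rightarrow> bool" where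
  "w_module D sc N \<longleftrightarrow> w_closure D sc N = N"

definition w_submodule :: "'k::field set \<Rightarrow> ('k \<Rightarrow> 'v::ab_group_add \<Rightarrow> 'v) \<Rightarrow> 'v set \<Rightarrow> 'v set \<Rightarrow> bool" where
  "w_submodule D sc M L \<longleftrightarrow> submodule D sc L \<and> L \<subseteq> M \<and> w_module D sc L"

definition SM_module :: "'k::field set \<Rightarrow> ('k \<Rightarrow> 'v::ab_group_add \<Rightarrow> 'v) \<Rightarrow> 'v set \<Rightarrow> bool" where
  "SM_module D sc M \<longleftrightarrow> w_module D sc M \<and>
     (\<forall>f :: nat \<Rightarrow> 'v set. (\<forall>n. w_submodule D sc M (f n)) \<and> (\<forall>n. f n \<subseteq> f (Suc n)) \<longrightarrow>
        (\<exists>n. \<forall>m\<ge>n. f m = f n))"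

definition S_w_finite :: "'k::field set \<Rightarrow> ('k \<Rightarrow> 'v::ab_group_add \<Rightarrow> 'v) \<Rightarrow> 'k set \<Rightarrow> 'v set \<Rightarrow> 'v set \<Rightarrow> bool" where
  "S_w_finite D sc S M N \<longleftrightarrow> (\<exists>s\<in>S. \<exists>F0. finite F0 \<and> F0 \<subseteq> M \<and>
      sc s ` N \<subseteq> w_closure D sc (lspan D sc F0) \<and>
      w_closure D sc (lspan D sc F0) \<subseteq> w_closure D sc N)"

definition S_SM_module :: "'k::field set \<Rightarrow> ('k \<Rightarrow> 'v::ab_group_add \<Rightarrow> 'v) \<Rightarrow> 'k set \<Rightarrow> 'v set \<Rightarrow> bool" where
  "S_SM_module D sc S M \<longleftrightarrow> (\<forall>L. w_submodule D sc M L \<longrightarrow> S_w_finite D sc S M L)"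

definition P_SM_module :: "'k::field set \<Rightarrow> ('k \<Rightarrow> 'v::ab_group_add \<Rightarrow> 'v) \<Rightarrow> 'k set \<Rightarrow> 'v set \<Rightarrow> bool" where
  "P_SM_module D sc P M \<longleftrightarrow> S_SM_module D sc (D - P) M"

definition w_ideal :: "'k::field set \<Rightarrow> 'k set \<Rightarrow> bool" where
  "w_ideal D I \<longleftrightarrow> is_ideal D I \<and> w_module D (*) I"

definition prime_w_ideal :: "'k::field set \<Rightarrow> 'k set \<Rightarrow> bool" where
  "prime_w_ideal D P \<longleftrightarrow> w_ideal D P \<and> P \<noteq> D \<and>
     (\<forall>a\<in>D. \<forall>b\<in>D. a * b \<in> P \<longrightarrow> a \<in> P \<or> b \<in> P)"

definition maximal_w_ideal :: "'k::field set \<Rightarrow> 'k set \<Rightarrow> bool" where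
  "maximal_w_ideal D m \<longleftrightarrow> w_ideal D m \<and> m \<noteq> D \<and>
     (\<forall>I. w_ideal D I \<and> I \<noteq> D \<and> m \<subseteq> I \<longrightarrow> I = m)"

end

theory Submission
  imports Defs
begin

text \<open>
  (1) \<open>\<Rightarrow>\<close> (2): in an SM-module every w-submodule \<open>L\<close> is w-finite, i.e. \<open>L = (F)\<^sub>w\<close> for a
  finite \<open>F \<subseteq> L\<close>, and this is \<open>S\<close>-w-finiteness with \<open>s = 1 \<in> D - P\<close>.
  (2) \<open>\<Rightarrow>\<close> (3): maximal w-ideals are prime.
  (3) \<open>\<Rightarrow>\<close> (1): for a w-submodule \<open>L\<close>, the set \<open>T\<close> of all \<open>s \<in> D\<close> with \<open>s L \<subseteq> (F)\<^sub>w\<close> for some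
  finite \<open>F \<subseteq> L\<close> lies in no maximal w-ideal. Hence the ideal generated by \<open>T\<close> has w-closure \<open>D\<close>,
  so it contains some \<open>J \<in> GV(D)\<close>, which, being finitely generated, already lies in the ideal
  generated by finitely many \<open>s\<^sub>i \<in> T\<close>. With \<open>F\<close> the union of the corresponding finite sets
  \<open>F\<^sub>i\<close> we get \<open>J L \<subseteq> (F)\<^sub>w\<close>, whence \<open>L \<subseteq> (F)\<^sub>w\<close>. Finally, w-finiteness of all
  w-submodules gives the ascending chain condition, because the union of a chain of
  w-submodules is again a w-submodule.
\<close>

section \<open>Spans over a subring\<close>

lemma vector_space_mult: "vector_space ((*) :: 'k::field \<Rightarrow> 'k \<Rightarrow> 'k)"
  by unfold_locales (simp_all add: algebra_simps)

lemma submodule_subset_scalars: "submodule R sc N \<Longrightarrow> R' \<subseteq> R \<Longrightarrow> submodule R' sc N"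
  unfolding submodule_def by blast

lemma lspan_mono: "S \<subseteq> T \<Longrightarrow> lspan R sc S \<subseteq> lspan R sc T"
  unfolding lspan_def by blast

lemma lspan_finite_subset: "x \<in> lspan R sc S \<Longrightarrow> \<exists>F. finite F \<and> F \<subseteq> S \<and> x \<in> lspan R sc F"
  unfolding lspan_def by blast

lemma finite_subset_lspan_finite:
  assumes "finite G" "G \<subseteq> lspan R sc T"
  shows "\<exists>T'. finite T' \<and> T' \<subseteq> T \<and> G \<subseteq> lspan R sc T'"
  using assms
proof (induction G rule: finite_induct)
  case empty
  then show ?case by blast
next
  case (insert g G)
  then obtain T' where T': "finite T'" "T' \<subseteq> T" "G \<subseteq> lspan R sc T'"
    by blast
  obtain F where F: "finite F" "F \<subseteq> T" "g \<in> lspan R sc F"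
    using insert.prems lspan_finite_subset by (metis insert_subset)
  have "G \<subseteq> lspan R sc (T' \<union> F)" "g \<in> lspan R sc (T' \<union> F)"
    using T'(3) F(3) lspan_mono[of T' "T' \<union> F" R sc] lspan_mono[of F "T' \<union> F" R sc] by auto
  with T' F show ?case
    by (intro exI[of _ "T' \<union> F"]) simp
qed

lemma lspan_subset_submodule:
  assumes N: "submodule R sc N" and "S \<subseteq> N"
  shows "lspan R sc S \<subseteq> N"
proof
  fix x
  assume "x \<in> lspan R sc S"
  then obtain F c where x: "x = (\<Sum>y\<in>F. sc (c y) y)" and "finite F" "F \<subseteq> N" "\<forall>y\<in>F. c y \<in> R"
    using \<open>S \<subseteq> N\<close> unfolding lspan_def by blast
  from \<open>finite F\<close> this(3,4) have "(\<Sum>y\<in>F. sc (c y) y) \<in> N"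
    by (induction F rule: finite_induct) (use N in \<open>auto simp: submodule_def\<close>)
  then show "x \<in> N"
    by (simp add: x)
qed

lemma submodule_Union_chain:
  assumes C: "C \<noteq> {}" "subset.chain \<A> C" and mods: "\<forall>A\<in>C. submodule R sc A"
  shows "submodule R sc (\<Union>C)"
  unfolding submodule_def
proof (intro conjI ballI)
  obtain A where "A \<in> C"
    using C(1) by blast
  then show "0 \<in> \<Union>C"
    using mods unfolding submodule_def by blast
next
  fix x y
  assume "x \<in> \<Union>C" "y \<in> \<Union>C"
  then have "finite {x, y}" "{x, y} \<subseteq> \<Union>C"
    by auto
  then obtain A where A: "A \<in> C" "{x, y} \<subseteq> A"
    by (rule finite_subset_Union_chain[OF _ _ C])
  then have "x + y \<in> A"
    using mods unfolding submodule_def by simp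
  then show "x + y \<in> \<Union>C"
    using A(1) by blast
next
  fix a x
  assume "a \<in> R" "x \<in> \<Union>C"
  then obtain A where "A \<in> C" "x \<in> A" "a \<in> R"
    by blast
  then show "sc a x \<in> \<Union>C"
    using mods unfolding submodule_def by blast
qed

lemma subset_chain_range_mono:
  assumes "mono (f :: 'b::linorder \<Rightarrow> 'a set)"
  shows "subset.chain (range f) (range f)"
  unfolding subset_chain_def
proof (intro conjI ballI order_refl)
  fix A B
  assume "A \<in> range f" "B \<in> range f"
  then obtain a b where "A = f a" "B = f b"
    by blast
  then show "A \<subseteq> B \<or> B \<subseteq> A"
    using monoD[OF assms, of a b] monoD[OF assms, of b a] le_cases[of a b] by blast
qed

context
  fixes sc :: "'k::field \<Rightarrow> 'v::ab_group_add \<Rightarrow> 'v"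
  assumes vs: "vector_space sc"
begin

interpretation vs: vector_space sc
  by (rule vs)

lemma subset_lspan:
  assumes "1 \<in> R"
  shows "S \<subseteq> lspan R sc S"
proof
  fix x
  assume "x \<in> S"
  have "x = (\<Sum>y\<in>{x}. sc 1 y)"
    by simp
  then show "x \<in> lspan R sc S"
    unfolding lspan_def mem_Collect_eq using \<open>x \<in> S\<close> assms
    by (intro exI[of _ "{x}"] exI[of _ "\<lambda>_. 1"]) simp
qed

lemma submodule_lspan:
  assumes R: "0 \<in> R" "\<And>a b. a \<in> R \<Longrightarrow> b \<in> R \<Longrightarrow> a + b \<in> R"
    "\<And>a b. a \<in> R \<Longrightarrow> b \<in> R \<Longrightarrow> a * b \<in> R"
  shows "submodule R sc (lspan R sc S)"
  unfolding submodule_def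
proof (intro conjI ballI)
  show "0 \<in> lspan R sc S"
    unfolding lspan_def by (rule CollectI, rule exI[of _ "{}"]) auto
next
  fix u v
  assume "u \<in> lspan R sc S" "v \<in> lspan R sc S"
  then obtain F1 c1 F2 c2
    where u: "u = (\<Sum>x\<in>F1. sc (c1 x) x)" "finite F1" "F1 \<subseteq> S" "\<forall>x\<in>F1. c1 x \<in> R"
      and v: "v = (\<Sum>x\<in>F2. sc (c2 x) x)" "finite F2" "F2 \<subseteq> S" "\<forall>x\<in>F2. c2 x \<in> R"
    unfolding lspan_def by blast
  define c where "c x = (if x \<in> F1 then c1 x else 0) + (if x \<in> F2 then c2 x else 0)" for x
  have "(\<Sum>x\<in>F1 \<union> F2. sc (c x) x)
      = (\<Sum>x\<in>F1 \<union> F2. if x \<in> F1 then sc (c1 x) x else 0)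
      + (\<Sum>x\<in>F1 \<union> F2. if x \<in> F2 then sc (c2 x) x else 0)"
    unfolding sum.distrib[symmetric] c_def by (rule sum.cong) (auto simp: vs.scale_left_distrib)
  also have "\<dots> = u + v"
    using u v by (simp add: sum.If_cases Int_absorb1)
  finally have "u + v = (\<Sum>x\<in>F1 \<union> F2. sc (c x) x)" ..
  moreover have "\<forall>x\<in>F1 \<union> F2. c x \<in> R"
    using u v R unfolding c_def by auto
  ultimately show "u + v \<in> lspan R sc S"
    unfolding lspan_def mem_Collect_eq using u v
    by (intro exI[of _ "F1 \<union> F2"] exI[of _ c]) simp
next
  fix a u
  assume a: "a \<in> R" and "u \<in> lspan R sc S"
  then obtain F c where u: "u = (\<Sum>x\<in>F. sc (c x) x)" "finite F" "F \<subseteq> S" "\<forall>x\<in>F. c x \<in> R"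
    unfolding lspan_def by blast
  then have "sc a u = (\<Sum>x\<in>F. sc (a * c x) x) \<and> (\<forall>x\<in>F. a * c x \<in> R)"
    using a R(3) by (simp add: vs.scale_sum_right)
  then show "sc a u \<in> lspan R sc S"
    unfolding lspan_def mem_Collect_eq using u
    by (intro exI[of _ F] exI[of _ "\<lambda>x. a * c x"]) simp
qed

lemma submodule_lspan_UNIV: "submodule R sc (lspan UNIV sc S)"
  using submodule_subset_scalars[OF submodule_lspan] by blast

lemma lspan_UNIV_idem: "lspan UNIV sc (lspan UNIV sc S) = lspan UNIV sc S"
  using lspan_subset_submodule[OF submodule_lspan_UNIV] subset_lspan by blast

lemma in_lspan_UNIV_if_scaled:
  assumes "s \<noteq> 0" "sc s x \<in> N"
  shows "x \<in> lspan UNIV sc N"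
proof -
  have "sc (inverse s) (sc s x) \<in> lspan UNIV sc N"
    using assms(2) subset_lspan[of UNIV N] submodule_lspan_UNIV[of UNIV N]
    unfolding submodule_def by blast
  then show ?thesis
    using assms(1) by simp
qed

lemma submodule_multipliers:
  assumes N: "submodule R sc N"
  shows "submodule R (*) {j. sc j x \<in> N}"
  unfolding submodule_def
proof (intro conjI ballI)
  show "0 \<in> {j. sc j x \<in> N}"
    using N by (simp add: submodule_def)
next
  fix a b
  assume "a \<in> {j. sc j x \<in> N}" "b \<in> {j. sc j x \<in> N}"
  then show "a + b \<in> {j. sc j x \<in> N}"
    using N by (simp add: submodule_def vs.scale_left_distrib)
next
  fix a b
  assume "a \<in> R" "b \<in> {j. sc j x \<in> N}"
  then show "a * b \<in> {j. sc j x \<in> N}"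
    using N unfolding submodule_def mem_Collect_eq vs.scale_scale[symmetric] by blast
qed

end

section \<open>GV-ideals\<close>

lemma subset_frac_inv_frac_inv: "A \<subseteq> frac_inv D (frac_inv D (A :: 'k::field set))"
  unfolding frac_inv_def by (auto simp: mult.commute)

locale domain_qf =
  fixes D :: "'k::field set"
  assumes qf: "domain_with_qf D"

context domain_qf
begin

lemma
  shows zero_mem_D: "0 \<in> D" and one_mem_D: "1 \<in> D"
    and add_mem_D: "a \<in> D \<Longrightarrow> b \<in> D \<Longrightarrow> a + b \<in> D"
    and mult_mem_D: "a \<in> D \<Longrightarrow> b \<in> D \<Longrightarrow> a * b \<in> D"
  using qf unfolding domain_with_qf_def by auto

lemma submodule_D: "submodule D (*) D"
  unfolding submodule_def using zero_mem_D add_mem_D mult_mem_D by blast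

lemma submodule_lspan_D: "vector_space sc \<Longrightarrow> submodule D sc (lspan D sc S)"
  using submodule_lspan zero_mem_D add_mem_D mult_mem_D by blast

lemma is_ideal_lspan: "S \<subseteq> D \<Longrightarrow> is_ideal D (lspan D (*) S)"
  unfolding is_ideal_def
  using lspan_subset_submodule[OF submodule_D] submodule_lspan_D[OF vector_space_mult] by blast

lemma frac_inv_D: "frac_inv D D = D"
proof
  show "frac_inv D D \<subseteq> D"
    unfolding frac_inv_def using one_mem_D by force
  show "D \<subseteq> frac_inv D D"
    unfolding frac_inv_def using mult_mem_D by blast
qed

lemma frac_inv_lspan: "a \<in> frac_inv D (lspan D (*) G) \<longleftrightarrow> (\<forall>g\<in>G. a * g \<in> D)"
proof
  assume "a \<in> frac_inv D (lspan D (*) G)"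
  then show "\<forall>g\<in>G. a * g \<in> D"
    using subset_lspan[OF vector_space_mult one_mem_D] unfolding frac_inv_def by blast
next
  assume "\<forall>g\<in>G. a * g \<in> D"
  then have "G \<subseteq> {g. g * a \<in> D}"
    by (auto simp: mult.commute)
  then have "lspan D (*) G \<subseteq> {g. g * a \<in> D}"
    by (rule lspan_subset_submodule[OF submodule_multipliers[OF vector_space_mult submodule_D]])
  then show "a \<in> frac_inv D (lspan D (*) G)"
    unfolding frac_inv_def by (auto simp: mult.commute)
qed

lemma GV_subset_D: "J \<in> GV D \<Longrightarrow> J \<subseteq> D"
  and GV_submodule: "J \<in> GV D \<Longrightarrow> submodule D (*) J"
  unfolding GV_def is_ideal_def by blast+

lemma GV_finitely_generated:
  assumes "J \<in> GV D"
  obtains G where "finite G" "G \<subseteq> J" "J = lspan D (*) G"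
  using assms subset_lspan[OF vector_space_mult one_mem_D] unfolding GV_def by blast

lemma GV_frac_inv:
  assumes J: "J \<in> GV D"
  shows "frac_inv D J = D"
proof
  have "frac_inv D J \<subseteq> frac_inv D (v_closure D J)"
    unfolding v_closure_def by (rule subset_frac_inv_frac_inv)
  then show "frac_inv D J \<subseteq> D"
    using J frac_inv_D unfolding GV_def by simp
  show "D \<subseteq> frac_inv D J"
    using GV_subset_D[OF J] mult_mem_D unfolding frac_inv_def by blast
qed

lemma D_in_GV: "D \<in> GV D"
proof -
  have "D \<subseteq> lspan D (*) {1}"
  proof
    fix d
    assume "d \<in> D"
    then show "d \<in> lspan D (*) {1}"
      unfolding lspan_def mem_Collect_eq by (intro exI[of _ "{1}"] exI[of _ "\<lambda>_. d"]) simp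
  qed
  moreover have "lspan D (*) {1} \<subseteq> D"
    using lspan_subset_submodule[OF submodule_D] one_mem_D by blast
  ultimately have "finite {1} \<and> {1} \<subseteq> D \<and> D = lspan D (*) {1}"
    using one_mem_D by blast
  then show ?thesis
    unfolding GV_def mem_Collect_eq is_ideal_def v_closure_def frac_inv_D
    using submodule_D by blast
qed

lemma lspan_products_in_GV:
  assumes J1: "lspan D (*) G1 \<in> GV D" "finite G1" and J2: "lspan D (*) G2 \<in> GV D" "finite G2"
  shows "lspan D (*) {a * b | a b. a \<in> G1 \<and> b \<in> G2} \<in> GV D"
proof -
  define H where "H = {a * b | a b. a \<in> G1 \<and> b \<in> G2}"
  have "G1 \<subseteq> D" "G2 \<subseteq> D"
    using J1 J2 GV_subset_D subset_lspan[OF vector_space_mult one_mem_D] by blast+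
  then have HD: "H \<subseteq> D"
    unfolding H_def using mult_mem_D by blast
  have "H = (\<lambda>(a, b). a * b) ` (G1 \<times> G2)"
    unfolding H_def by auto
  then have "finite H"
    using J1(2) J2(2) by simp
  have "frac_inv D (lspan D (*) H) \<subseteq> D"
  proof
    fix a
    assume "a \<in> frac_inv D (lspan D (*) H)"
    then have "\<forall>g1\<in>G1. \<forall>g2\<in>G2. (a * g1) * g2 \<in> D"
      unfolding frac_inv_lspan H_def by (auto simp: mult.assoc)
    then have "\<forall>g1\<in>G1. a * g1 \<in> frac_inv D (lspan D (*) G2)"
      unfolding frac_inv_lspan by blast
    then have "a \<in> frac_inv D (lspan D (*) G1)"
      unfolding GV_frac_inv[OF J2(1)] frac_inv_lspan .
    then show "a \<in> D"
      unfolding GV_frac_inv[OF J1(1)] .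
  qed
  moreover have "D \<subseteq> frac_inv D (lspan D (*) H)"
    using is_ideal_lspan[OF HD] mult_mem_D unfolding is_ideal_def frac_inv_def by blast
  ultimately have "v_closure D (lspan D (*) H) = D"
    unfolding v_closure_def using frac_inv_D by simp
  then show ?thesis
    unfolding GV_def H_def[symmetric] using is_ideal_lspan[OF HD] HD \<open>finite H\<close> by blast
qed

lemma GV_directed:
  assumes "J1 \<in> GV D" "J2 \<in> GV D"
  shows "\<exists>J\<in>GV D. J \<subseteq> J1 \<and> J \<subseteq> J2"
proof -
  obtain G1 where G1: "finite G1" "G1 \<subseteq> J1" "J1 = lspan D (*) G1"
    using assms(1) by (rule GV_finitely_generated)
  obtain G2 where G2: "finite G2" "G2 \<subseteq> J2" "J2 = lspan D (*) G2"
    using assms(2) by (rule GV_finitely_generated)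
  let ?J = "lspan D (*) {a * b | a b. a \<in> G1 \<and> b \<in> G2}"
  have "?J \<in> GV D"
    using lspan_products_in_GV assms G1 G2 by simp
  moreover have "?J \<subseteq> J1"
  proof (rule lspan_subset_submodule[OF GV_submodule[OF assms(1)]], safe)
    fix a b
    assume "a \<in> G1" "b \<in> G2"
    then have "b * a \<in> J1"
      using G2(2) GV_subset_D[OF assms(2)] G1(2) GV_submodule[OF assms(1)]
      unfolding submodule_def by blast
    then show "a * b \<in> J1"
      by (simp add: mult.commute)
  qed
  moreover have "?J \<subseteq> J2"
  proof (rule lspan_subset_submodule[OF GV_submodule[OF assms(2)]], safe)
    fix a b
    assume "a \<in> G1" "b \<in> G2"
    then show "a * b \<in> J2"
      using G1(2) GV_subset_D[OF assms(1)] G2(2) GV_submodule[OF assms(2)]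
      unfolding submodule_def by blast
  qed
  ultimately show ?thesis
    by blast
qed

lemma GV_finite_lower_bound:
  assumes "finite \<J>" "\<J> \<subseteq> GV D"
  shows "\<exists>J\<in>GV D. \<forall>J'\<in>\<J>. J \<subseteq> J'"
  using assms
proof (induction \<J> rule: finite_induct)
  case empty
  then show ?case
    using D_in_GV by blast
next
  case (insert J' \<J>)
  then obtain J1 where J1: "J1 \<in> GV D" "\<forall>J''\<in>\<J>. J1 \<subseteq> J''"
    by blast
  obtain J where "J \<in> GV D" "J \<subseteq> J1" "J \<subseteq> J'"
    using GV_directed[OF J1(1)] insert.prems by blast
  with J1(2) show ?case
    by blast
qed

end

section \<open>The w-closure\<close>

lemma w_closure_subset_lspan: "w_closure D sc N \<subseteq> lspan UNIV sc N"
  unfolding w_closure_def by blast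

lemma w_closure_mono: "N1 \<subseteq> N2 \<Longrightarrow> w_closure D sc N1 \<subseteq> w_closure D sc N2"
  unfolding w_closure_def using lspan_mono[of N1 N2 UNIV sc] by blast

context domain_qf
begin

context
  fixes sc :: "'k \<Rightarrow> 'v::ab_group_add \<Rightarrow> 'v"
  assumes vs: "vector_space sc"
begin

interpretation vs: vector_space sc
  by (rule vs)

lemma subset_w_closure:
  assumes N: "submodule D sc N"
  shows "N \<subseteq> w_closure D sc N"
proof
  fix x
  assume "x \<in> N"
  then have "x \<in> lspan UNIV sc N" "\<forall>j\<in>D. sc j x \<in> N"
    using subset_lspan[OF vs, of UNIV N] N unfolding submodule_def by blast+
  then show "x \<in> w_closure D sc N"
    unfolding w_closure_def using D_in_GV by blast
qed

lemma in_w_closureI: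
  assumes "s \<noteq> 0" "sc s x \<in> N" "J \<in> GV D" "\<forall>j\<in>J. sc j x \<in> N"
  shows "x \<in> w_closure D sc N"
  using assms in_lspan_UNIV_if_scaled[OF vs] unfolding w_closure_def by blast

lemma submodule_w_closure:
  assumes N: "submodule D sc N"
  shows "submodule D sc (w_closure D sc N)"
  unfolding submodule_def
proof (intro conjI ballI)
  show "0 \<in> w_closure D sc N"
    using subset_w_closure[OF N] N unfolding submodule_def by blast
next
  fix x y
  assume "x \<in> w_closure D sc N" "y \<in> w_closure D sc N"
  then obtain J1 J2 where J1: "J1 \<in> GV D" "\<forall>j\<in>J1. sc j x \<in> N"
    and J2: "J2 \<in> GV D" "\<forall>j\<in>J2. sc j y \<in> N"
    and span: "x \<in> lspan UNIV sc N" "y \<in> lspan UNIV sc N"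
    unfolding w_closure_def by blast
  obtain J where J: "J \<in> GV D" "J \<subseteq> J1" "J \<subseteq> J2"
    using GV_directed[OF J1(1) J2(1)] by blast
  have "\<forall>j\<in>J. sc j (x + y) \<in> N"
    using J J1 J2 N unfolding submodule_def by (simp add: vs.scale_right_distrib subset_iff)
  moreover have "x + y \<in> lspan UNIV sc N"
    using span submodule_lspan_UNIV[OF vs, of UNIV N] unfolding submodule_def by blast
  ultimately show "x + y \<in> w_closure D sc N"
    unfolding w_closure_def using J(1) by blast
next
  fix a x
  assume "a \<in> D" "x \<in> w_closure D sc N"
  then obtain J where J: "J \<in> GV D" "\<forall>j\<in>J. sc j x \<in> N" and span: "x \<in> lspan UNIV sc N"
    unfolding w_closure_def by blast
  have "\<forall>j\<in>J. sc j (sc a x) \<in> N"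
  proof
    fix j
    assume "j \<in> J"
    then have "sc a (sc j x) \<in> N"
      using J(2) \<open>a \<in> D\<close> N unfolding submodule_def by blast
    then show "sc j (sc a x) \<in> N"
      by (simp add: mult.commute)
  qed
  moreover have "sc a x \<in> lspan UNIV sc N"
    using span submodule_lspan_UNIV[OF vs, of UNIV N] unfolding submodule_def by blast
  ultimately show "sc a x \<in> w_closure D sc N"
    unfolding w_closure_def using J(1) by blast
qed

text \<open>Every generator \<open>g\<close> of \<open>J\<close> has some \<open>J\<^sub>g \<in> GV(D)\<close> with \<open>J\<^sub>g g x \<subseteq> N\<close>; a common
  lower bound \<open>J'\<close> of the \<open>J\<^sub>g\<close> gives \<open>J J' x \<subseteq> N\<close>.\<close>

lemma GV_into_w_closure_imp_GV_into:
  assumes N: "submodule D sc N" and J: "J \<in> GV D" "\<forall>j\<in>J. sc j x \<in> w_closure D sc N"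
  shows "\<exists>J'\<in>GV D. \<forall>j\<in>J'. sc j x \<in> N"
proof -
  obtain G where G: "finite G" "G \<subseteq> J" "J = lspan D (*) G"
    using J(1) by (rule GV_finitely_generated)
  have "\<forall>g\<in>G. \<exists>Jg\<in>GV D. \<forall>j\<in>Jg. sc j (sc g x) \<in> N"
  proof
    fix g
    assume "g \<in> G"
    then have "sc g x \<in> w_closure D sc N"
      using J(2) G(2) by blast
    then show "\<exists>Jg\<in>GV D. \<forall>j\<in>Jg. sc j (sc g x) \<in> N"
      unfolding w_closure_def by blast
  qed
  then obtain Jg where Jg: "\<forall>g\<in>G. Jg g \<in> GV D \<and> (\<forall>j\<in>Jg g. sc j (sc g x) \<in> N)"
    unfolding Bex_def by (rule bchoice[THEN exE])
  have "finite (Jg ` G)" "Jg ` G \<subseteq> GV D"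
    using G(1) Jg by auto
  then obtain J' where J': "J' \<in> GV D" "\<forall>g\<in>G. J' \<subseteq> Jg g"
    by (auto dest: GV_finite_lower_bound)
  obtain G' where G': "finite G'" "G' \<subseteq> J'" "J' = lspan D (*) G'"
    using J'(1) by (rule GV_finitely_generated)
  let ?J = "lspan D (*) {a * b | a b. a \<in> G \<and> b \<in> G'}"
  have "lspan D (*) G \<in> GV D" "lspan D (*) G' \<in> GV D"
    using J(1) J'(1) G(3) G'(3) by simp_all
  then have "?J \<in> GV D"
    using lspan_products_in_GV G(1) G'(1) by blast
  moreover have "?J \<subseteq> {j. sc j x \<in> N}"
  proof (rule lspan_subset_submodule[OF submodule_multipliers[OF vs N]], safe)
    fix a b
    assume "a \<in> G" "b \<in> G'"
    then have "sc b (sc a x) \<in> N"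
      using Jg J'(2) G'(2) by blast
    then show "sc (a * b) x \<in> N"
      by (simp add: mult.commute)
  qed
  ultimately show ?thesis
    by blast
qed

lemma w_closure_idem:
  assumes N: "submodule D sc N"
  shows "w_closure D sc (w_closure D sc N) = w_closure D sc N"
proof
  show "w_closure D sc N \<subseteq> w_closure D sc (w_closure D sc N)"
    by (rule subset_w_closure[OF submodule_w_closure[OF N]])
next
  show "w_closure D sc (w_closure D sc N) \<subseteq> w_closure D sc N"
  proof
    fix x
    assume x: "x \<in> w_closure D sc (w_closure D sc N)"
    have "x \<in> lspan UNIV sc (w_closure D sc N)"
      using x w_closure_subset_lspan by blast
    then have "x \<in> lspan UNIV sc (lspan UNIV sc N)"
      using lspan_mono[OF w_closure_subset_lspan[of D sc N]] by blast
    then have "x \<in> lspan UNIV sc N"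
      unfolding lspan_UNIV_idem[OF vs] .
    moreover obtain J where "J \<in> GV D" "\<forall>j\<in>J. sc j x \<in> w_closure D sc N"
      using x unfolding w_closure_def by blast
    then have "\<exists>J'\<in>GV D. \<forall>j\<in>J'. sc j x \<in> N"
      by (rule GV_into_w_closure_imp_GV_into[OF N])
    ultimately show "x \<in> w_closure D sc N"
      unfolding w_closure_def by blast
  qed
qed

lemma w_module_w_closure: "submodule D sc N \<Longrightarrow> w_module D sc (w_closure D sc N)"
  unfolding w_module_def by (rule w_closure_idem)

lemma w_closure_lspan_subset:
  assumes "submodule D sc L" "w_module D sc L" "F \<subseteq> L"
  shows "w_closure D sc (lspan D sc F) \<subseteq> L"
  using w_closure_mono[OF lspan_subset_submodule[OF assms(1,3)], of D sc] assms(2)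
  unfolding w_module_def by simp

lemma w_closure_finite_character:
  assumes x: "x \<in> w_closure D sc N"
  obtains F where "finite F" "F \<subseteq> N" "x \<in> w_closure D sc (lspan D sc F)"
proof -
  have "x \<in> lspan UNIV sc N"
    using x w_closure_subset_lspan by blast
  then obtain F\<^sub>0 where F\<^sub>0: "finite F\<^sub>0" "F\<^sub>0 \<subseteq> N" "x \<in> lspan UNIV sc F\<^sub>0"
    using lspan_finite_subset[of x UNIV sc N] by blast
  obtain J where J: "J \<in> GV D" "\<forall>j\<in>J. sc j x \<in> N"
    using x unfolding w_closure_def by blast
  obtain G where G: "finite G" "G \<subseteq> J" "J = lspan D (*) G"
    using J(1) by (rule GV_finitely_generated)
  define F where "F = F\<^sub>0 \<union> (\<lambda>g. sc g x) ` G"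
  have "finite F" "F \<subseteq> N"
    unfolding F_def using F\<^sub>0 G J(2) by auto
  have F_span: "F \<subseteq> lspan D sc F"
    by (rule subset_lspan[OF vs one_mem_D])
  have "J \<subseteq> {j. sc j x \<in> lspan D sc F}"
    unfolding G(3)
  proof (rule lspan_subset_submodule[OF submodule_multipliers[OF vs submodule_lspan_D[OF vs]]])
    show "G \<subseteq> {j. sc j x \<in> lspan D sc F}"
      using F_span unfolding F_def by blast
  qed
  moreover have "F\<^sub>0 \<subseteq> lspan D sc F"
    using F_span unfolding F_def by blast
  then have "x \<in> lspan UNIV sc (lspan D sc F)"
    using F\<^sub>0(3) lspan_mono[of F\<^sub>0 "lspan D sc F" UNIV sc] by blast
  ultimately have "x \<in> w_closure D sc (lspan D sc F)"
    unfolding w_closure_def using J(1) by blast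
  with \<open>finite F\<close> \<open>F \<subseteq> N\<close> show thesis
    by (rule that)
qed

lemma w_module_Union_chain:
  assumes C: "C \<noteq> {}" "subset.chain \<A> C"
    and mods: "\<forall>A\<in>C. submodule D sc A \<and> w_module D sc A"
  shows "w_module D sc (\<Union>C)"
proof -
  have "w_closure D sc (\<Union>C) \<subseteq> \<Union>C"
  proof
    fix x
    assume "x \<in> w_closure D sc (\<Union>C)"
    then obtain F where F: "finite F" "F \<subseteq> \<Union>C" "x \<in> w_closure D sc (lspan D sc F)"
      by (rule w_closure_finite_character)
    obtain A where A: "A \<in> C" "F \<subseteq> A"
      by (rule finite_subset_Union_chain[OF F(1,2) C])
    have "submodule D sc A" "w_module D sc A"
      using A(1) mods by blast+
    then have "w_closure D sc (lspan D sc F) \<subseteq> A"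
      using A(2) by (rule w_closure_lspan_subset)
    then show "x \<in> \<Union>C"
      using F(3) A(1) by blast
  qed
  moreover have "submodule D sc (\<Union>C)"
    using mods by (intro submodule_Union_chain[OF C]) blast
  ultimately show ?thesis
    unfolding w_module_def using subset_w_closure by blast
qed

lemma w_submodule_Union_chain:
  assumes C: "C \<noteq> {}" "subset.chain \<A> C" and subs: "\<forall>A\<in>C. w_submodule D sc M A"
  shows "w_submodule D sc M (\<Union>C)"
proof -
  have mods: "\<forall>A\<in>C. submodule D sc A \<and> w_module D sc A"
    using subs unfolding w_submodule_def by blast
  have "submodule D sc (\<Union>C)"
    using mods by (intro submodule_Union_chain[OF C]) blast
  moreover have "w_module D sc (\<Union>C)"
    using mods by (rule w_module_Union_chain[OF C])
  moreover have "\<Union>C \<subseteq> M"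
    using subs unfolding w_submodule_def by blast
  ultimately show ?thesis
    unfolding w_submodule_def by blast
qed

end

end

section \<open>Maximal w-ideals\<close>

context domain_qf
begin

lemma w_closure_ideal_subset_D:
  assumes I: "is_ideal D I"
  shows "w_closure D (*) I \<subseteq> D"
proof
  fix x
  assume "x \<in> w_closure D (*) I"
  then obtain J where J: "J \<in> GV D" "\<forall>j\<in>J. j * x \<in> I"
    unfolding w_closure_def by blast
  then have "\<forall>j\<in>J. x * j \<in> D"
    using I unfolding is_ideal_def by (auto simp: mult.commute)
  then have "x \<in> frac_inv D J"
    unfolding frac_inv_def by blast
  then show "x \<in> D"
    unfolding GV_frac_inv[OF J(1)] .
qed

lemma w_ideal_w_closure:
  assumes I: "is_ideal D I"
  shows "w_ideal D (w_closure D (*) I)"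
proof -
  have "submodule D (*) I"
    using I unfolding is_ideal_def by blast
  then show ?thesis
    unfolding w_ideal_def is_ideal_def
    using w_closure_ideal_subset_D[OF I] submodule_w_closure[OF vector_space_mult]
      w_module_w_closure[OF vector_space_mult] by blast
qed

lemma one_notin_proper_ideal:
  assumes I: "is_ideal D I" "I \<noteq> D"
  shows "1 \<notin> I"
proof
  assume "1 \<in> I"
  have "D \<subseteq> I"
  proof
    fix d
    assume "d \<in> D"
    then have "d * 1 \<in> I"
      using \<open>1 \<in> I\<close> I(1) unfolding is_ideal_def submodule_def by blast
    then show "d \<in> I"
      by simp
  qed
  then show False
    using I unfolding is_ideal_def by blast
qed

lemma w_ideal_zero: "w_ideal D {0}"
proof -
  have "submodule D (*) {0}" "submodule UNIV (*) {0 :: 'k}"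
    unfolding submodule_def by simp_all
  moreover have "w_closure D (*) {0} \<subseteq> {0}"
    using w_closure_subset_lspan[of D "(*)" "{0}"]
      lspan_subset_submodule[OF \<open>submodule UNIV (*) {0}\<close>, of "{0}"] by blast
  ultimately show ?thesis
    unfolding w_ideal_def is_ideal_def w_module_def
    using subset_w_closure[OF vector_space_mult] zero_mem_D by blast
qed

lemma maximal_w_ideal_superset:
  assumes A: "w_ideal D A" "A \<noteq> D"
  shows "\<exists>m. maximal_w_ideal D m \<and> A \<subseteq> m"
proof -
  define \<A> where "\<A> = {I. w_ideal D I \<and> I \<noteq> D \<and> A \<subseteq> I}"
  have "\<exists>m\<in>\<A>. \<forall>I\<in>\<A>. m \<subseteq> I \<longrightarrow> I = m"
  proof (rule subset_Zorn_nonempty)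
    show "\<A> \<noteq> {}"
      using A unfolding \<A>_def by blast
  next
    fix C
    assume C: "C \<noteq> {}" "subset.chain \<A> C"
    then have C\<A>: "C \<subseteq> \<A>"
      unfolding subset_chain_def by blast
    have mods: "submodule D (*) I" "w_module D (*) I" "I \<subseteq> D" "1 \<notin> I" if "I \<in> C" for I
    proof -
      have "w_ideal D I" "I \<noteq> D"
        using that C\<A> unfolding \<A>_def by blast+
      then show "submodule D (*) I" "w_module D (*) I" "I \<subseteq> D" "1 \<notin> I"
        using one_notin_proper_ideal unfolding w_ideal_def is_ideal_def by blast+
    qed
    have "submodule D (*) (\<Union>C)"
      using mods(1) by (intro submodule_Union_chain[OF C]) blast
    moreover have "w_module D (*) (\<Union>C)"
      using mods(1,2) by (intro w_module_Union_chain[OF vector_space_mult C]) blast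
    moreover have "\<Union>C \<subseteq> D" "1 \<notin> \<Union>C"
      using mods(3,4) by blast+
    moreover have "A \<subseteq> \<Union>C"
      using C(1) C\<A> unfolding \<A>_def by blast
    ultimately show "\<Union>C \<in> \<A>"
      unfolding \<A>_def w_ideal_def is_ideal_def using one_mem_D by blast
  qed
  then obtain m where m: "m \<in> \<A>" "\<forall>I\<in>\<A>. m \<subseteq> I \<longrightarrow> I = m"
    by blast
  then have "maximal_w_ideal D m"
    unfolding maximal_w_ideal_def \<A>_def by blast
  with m(1) show ?thesis
    unfolding \<A>_def by blast
qed

lemma ex_maximal_w_ideal: "\<exists>m. maximal_w_ideal D m"
proof -
  have "{0} \<noteq> D"
    using one_mem_D by force
  then show ?thesis
    using maximal_w_ideal_superset[OF w_ideal_zero] by blast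
qed

lemma GV_subset_if_not_in_maximal_w_ideal:
  assumes I: "is_ideal D I" and not_in: "\<forall>m. maximal_w_ideal D m \<longrightarrow> \<not> I \<subseteq> m"
  shows "\<exists>J\<in>GV D. J \<subseteq> I"
proof -
  have "w_closure D (*) I = D"
  proof (rule ccontr)
    assume "w_closure D (*) I \<noteq> D"
    then obtain m where m: "maximal_w_ideal D m" "w_closure D (*) I \<subseteq> m"
      using maximal_w_ideal_superset[OF w_ideal_w_closure[OF I]] by blast
    have "submodule D (*) I"
      using I unfolding is_ideal_def by blast
    then have "I \<subseteq> w_closure D (*) I"
      by (rule subset_w_closure[OF vector_space_mult])
    with m not_in show False
      by blast
  qed
  then have "1 \<in> w_closure D (*) I"
    using one_mem_D by simp
  then obtain J where "J \<in> GV D" "\<forall>j\<in>J. j * 1 \<in> I"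
    unfolding w_closure_def by blast
  then show ?thesis
    by (metis mult.right_neutral subsetI)
qed

lemma GV_subset_lspan_of_finite_subset:
  assumes T: "T \<subseteq> D" and not_in: "\<forall>m. maximal_w_ideal D m \<longrightarrow> \<not> T \<subseteq> m"
  obtains T' J where "finite T'" "T' \<subseteq> T" "J \<in> GV D" "J \<subseteq> lspan D (*) T'"
proof -
  have "T \<subseteq> lspan D (*) T"
    by (rule subset_lspan[OF vector_space_mult one_mem_D])
  then have "\<forall>m. maximal_w_ideal D m \<longrightarrow> \<not> lspan D (*) T \<subseteq> m"
    using not_in by (meson order_trans)
  then obtain J where J: "J \<in> GV D" "J \<subseteq> lspan D (*) T"
    using GV_subset_if_not_in_maximal_w_ideal[OF is_ideal_lspan[OF T]] by blast
  obtain G where G: "finite G" "G \<subseteq> J" "J = lspan D (*) G"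
    using J(1) by (rule GV_finitely_generated)
  have "G \<subseteq> lspan D (*) T"
    using G(2) J(2) by blast
  then obtain T' where T': "finite T'" "T' \<subseteq> T" "G \<subseteq> lspan D (*) T'"
    using finite_subset_lspan_finite[OF G(1) \<open>G \<subseteq> lspan D (*) T\<close>] by blast
  have "J \<subseteq> lspan D (*) T'"
    unfolding G(3) using T'(3) by (rule lspan_subset_submodule[OF submodule_lspan_D[OF vector_space_mult]])
  with T'(1,2) J(1) show thesis
    by (rule that)
qed

lemma GV_subset_lspan_insert_maximal_w_ideal:
  assumes m: "maximal_w_ideal D m" and a: "a \<in> D" "a \<notin> m"
  shows "\<exists>J\<in>GV D. J \<subseteq> lspan D (*) (insert a m)"
proof (rule GV_subset_if_not_in_maximal_w_ideal)
  have "m \<subseteq> D"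
    using m unfolding maximal_w_ideal_def w_ideal_def is_ideal_def by blast
  with a(1) show "is_ideal D (lspan D (*) (insert a m))"
    by (intro is_ideal_lspan) blast
  have aI: "insert a m \<subseteq> lspan D (*) (insert a m)"
    by (rule subset_lspan[OF vector_space_mult one_mem_D])
  show "\<forall>m'. maximal_w_ideal D m' \<longrightarrow> \<not> lspan D (*) (insert a m) \<subseteq> m'"
  proof (intro allI impI notI)
    fix m'
    assume m': "maximal_w_ideal D m'" and "lspan D (*) (insert a m) \<subseteq> m'"
    then have "m \<subseteq> m'" "a \<in> m'"
      using aI by blast+
    moreover have "m' = m"
      using m \<open>m \<subseteq> m'\<close> m' unfolding maximal_w_ideal_def by blast
    ultimately show False
      using a(2) by blast
  qed
qed

lemma maximal_w_ideal_prime: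
  assumes m: "maximal_w_ideal D m"
  shows "prime_w_ideal D m"
  unfolding prime_w_ideal_def
proof (intro conjI ballI impI)
  show wm: "w_ideal D m" "m \<noteq> D"
    using m unfolding maximal_w_ideal_def by auto
  then have sm: "submodule D (*) m" and wmm: "w_closure D (*) m = m"
    unfolding w_ideal_def is_ideal_def w_module_def by auto
  fix a b
  assume ab: "a \<in> D" "b \<in> D" "a * b \<in> m"
  show "a \<in> m \<or> b \<in> m"
  proof (cases "a \<in> m")
    case True
    then show ?thesis ..
  next
    case False
    then obtain J where J: "J \<in> GV D" "J \<subseteq> lspan D (*) (insert a m)"
      using GV_subset_lspan_insert_maximal_w_ideal[OF m ab(1)] by blast
    have "lspan D (*) (insert a m) \<subseteq> {j. j * b \<in> m}"
    proof (rule lspan_subset_submodule[OF submodule_multipliers[OF vector_space_mult sm]])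
      show "insert a m \<subseteq> {j. j * b \<in> m}"
        using ab sm unfolding submodule_def by (auto simp: mult.commute)
    qed
    moreover have "a \<noteq> 0"
      using False sm unfolding submodule_def by blast
    ultimately have "b \<in> w_closure D (*) m"
      using in_w_closureI[OF vector_space_mult _ ab(3) J(1)] J(2) by blast
    then show ?thesis
      using wmm by simp
  qed
qed

lemma one_mem_complement_of_prime_w_ideal: "prime_w_ideal D P \<Longrightarrow> 1 \<in> D - P"
  using one_notin_proper_ideal one_mem_D unfolding prime_w_ideal_def w_ideal_def by blast

end

section \<open>SM-modules\<close>

definition w_finite :: "'k::field set \<Rightarrow> ('k \<Rightarrow> 'v::ab_group_add \<Rightarrow> 'v) \<Rightarrow> 'v set \<Rightarrow> bool" where
  "w_finite D sc L \<longleftrightarrow> (\<exists>F. finite F \<and> F \<subseteq> L \<and> w_closure D sc (lspan D sc F) = L)"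

context domain_qf
begin

context
  fixes sc :: "'k \<Rightarrow> 'v::ab_group_add \<Rightarrow> 'v"
  assumes vs: "vector_space sc"
begin

interpretation vs: vector_space sc
  by (rule vs)

lemma subset_w_closure_lspan: "F \<subseteq> w_closure D sc (lspan D sc F)"
  using subset_lspan[OF vs one_mem_D, of F] subset_w_closure[OF vs submodule_lspan_D[OF vs, of F]]
  by (rule order_trans)

lemma w_submodule_w_closure_lspan:
  assumes L: "w_submodule D sc M L" and F: "F \<subseteq> L"
  shows "w_submodule D sc M (w_closure D sc (lspan D sc F))"
proof -
  have "submodule D sc L" "L \<subseteq> M" "w_module D sc L"
    using L unfolding w_submodule_def by blast+
  then have "w_closure D sc (lspan D sc F) \<subseteq> M"
    using w_closure_lspan_subset[OF vs _ _ F] by blast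
  moreover have "submodule D sc (w_closure D sc (lspan D sc F))"
    by (rule submodule_w_closure[OF vs submodule_lspan_D[OF vs]])
  moreover have "w_module D sc (w_closure D sc (lspan D sc F))"
    by (rule w_module_w_closure[OF vs submodule_lspan_D[OF vs]])
  ultimately show ?thesis
    unfolding w_submodule_def by blast
qed

lemma w_finiteI:
  assumes L: "w_submodule D sc M L" and F: "finite F" "F \<subseteq> L"
    and "L \<subseteq> w_closure D sc (lspan D sc F)"
  shows "w_finite D sc L"
proof -
  have "submodule D sc L" "w_module D sc L"
    using L unfolding w_submodule_def by blast+
  then have "w_closure D sc (lspan D sc F) \<subseteq> L"
    using F(2) by (rule w_closure_lspan_subset[OF vs])
  with assms(4) have "w_closure D sc (lspan D sc F) = L"
    by blast
  with F show ?thesis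
    unfolding w_finite_def by blast
qed

text \<open>A w-submodule that is not w-finite yields a strictly ascending chain
  \<open>(F\<^sub>0)\<^sub>w \<subset> (F\<^sub>1)\<^sub>w \<subset> \<dots>\<close>, where \<open>F\<^sub>n\<^sub>+\<^sub>1\<close> adds to \<open>F\<^sub>n\<close> an element of \<open>L\<close> outside \<open>(F\<^sub>n)\<^sub>w\<close>.\<close>

lemma w_finite_if_SM_module:
  assumes SM: "SM_module D sc M" and L: "w_submodule D sc M L"
  shows "w_finite D sc L"
proof (rule ccontr)
  assume not_fin: "\<not> w_finite D sc L"
  let ?cl = "\<lambda>F. w_closure D sc (lspan D sc F)"
  define pick where "pick F = (SOME y. y \<in> L \<and> y \<notin> ?cl F)" for F
  have pick: "pick F \<in> L" "pick F \<notin> ?cl F" if "finite F" "F \<subseteq> L" for F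
  proof -
    have "\<exists>y. y \<in> L \<and> y \<notin> ?cl F"
      using not_fin w_finiteI[OF L that] by blast
    then have "pick F \<in> L \<and> pick F \<notin> ?cl F"
      unfolding pick_def by (rule someI_ex)
    then show "pick F \<in> L" "pick F \<notin> ?cl F"
      by blast+
  qed
  define Fs where "Fs n = ((\<lambda>F. insert (pick F) F) ^^ n) {}" for n
  have Fs_Suc: "Fs (Suc n) = insert (pick (Fs n)) (Fs n)" for n
    unfolding Fs_def by simp
  have Fs: "finite (Fs n)" "Fs n \<subseteq> L" for n
  proof (induction n)
    case 0
    show "finite (Fs 0)" "Fs 0 \<subseteq> L"
      unfolding Fs_def by simp_all
  next
    case (Suc n)
    then show "finite (Fs (Suc n))" "Fs (Suc n) \<subseteq> L"
      using pick(1)[of "Fs n"] unfolding Fs_Suc by simp_all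
  qed
  have acc: "\<exists>n. \<forall>m\<ge>n. f m = f n"
    if "(\<forall>n. w_submodule D sc M (f n)) \<and> (\<forall>n. f n \<subseteq> f (Suc n))" for f
    using SM that unfolding SM_module_def by blast
  have "\<forall>n. w_submodule D sc M (?cl (Fs n))"
    using w_submodule_w_closure_lspan[OF L Fs(2)] by blast
  moreover have "\<forall>n. ?cl (Fs n) \<subseteq> ?cl (Fs (Suc n))"
    unfolding Fs_Suc by (intro allI w_closure_mono lspan_mono) blast
  ultimately have "\<exists>n. \<forall>m\<ge>n. ?cl (Fs m) = ?cl (Fs n)"
    by (intro acc conjI)
  then obtain n where "?cl (Fs (Suc n)) = ?cl (Fs n)"
    by (meson le_SucI order_refl)
  moreover have "pick (Fs n) \<in> ?cl (Fs (Suc n))"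
    using subset_w_closure_lspan[of "Fs (Suc n)"] unfolding Fs_Suc by blast
  ultimately show False
    using pick(2)[OF Fs] by simp
qed

lemma SM_module_if_w_finite:
  assumes M: "w_module D sc M" and fin: "\<forall>L. w_submodule D sc M L \<longrightarrow> w_finite D sc L"
  shows "SM_module D sc M"
  unfolding SM_module_def
proof (intro conjI allI impI)
  show "w_module D sc M"
    by (rule M)
  fix f :: "nat \<Rightarrow> 'v set"
  assume f: "(\<forall>n. w_submodule D sc M (f n)) \<and> (\<forall>n. f n \<subseteq> f (Suc n))"
  then have "mono f"
    by (simp add: mono_iff_le_Suc)
  then have chain: "subset.chain (range f) (range f)"
    by (rule subset_chain_range_mono)
  have ne: "range f \<noteq> {}"
    by blast
  have "w_submodule D sc M (\<Union>(range f))"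
    using f by (intro w_submodule_Union_chain[OF vs ne chain]) blast
  with fin have "w_finite D sc (\<Union>(range f))"
    by blast
  then obtain F where F: "finite F" "F \<subseteq> \<Union>(range f)"
    and F_cl: "w_closure D sc (lspan D sc F) = \<Union>(range f)"
    unfolding w_finite_def by blast
  obtain A where "A \<in> range f" "F \<subseteq> A"
    by (rule finite_subset_Union_chain[OF F ne chain])
  then obtain n where "F \<subseteq> f n"
    by blast
  have "submodule D sc (f n)" "w_module D sc (f n)"
    using f unfolding w_submodule_def by blast+
  then have "\<Union>(range f) \<subseteq> f n"
    unfolding F_cl[symmetric] using \<open>F \<subseteq> f n\<close> by (rule w_closure_lspan_subset[OF vs])
  then have "f m = f n" if "n \<le> m" for m
    using monoD[OF \<open>mono f\<close> that] by blast
  then show "\<exists>n. \<forall>m\<ge>n. f m = f n"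
    by blast
qed

lemma SM_module_iff_w_finite:
  "w_module D sc M \<Longrightarrow> SM_module D sc M \<longleftrightarrow> (\<forall>L. w_submodule D sc M L \<longrightarrow> w_finite D sc L)"
  using w_finite_if_SM_module SM_module_if_w_finite by blast

lemma S_w_finite_if_w_finite:
  assumes "1 \<in> S" "w_submodule D sc M L" "w_finite D sc L"
  shows "S_w_finite D sc S M L"
proof -
  obtain F where F: "finite F" "F \<subseteq> L" "w_closure D sc (lspan D sc F) = L"
    using assms(3) unfolding w_finite_def by blast
  have "L \<subseteq> M" "L \<subseteq> w_closure D sc L"
    using assms(2) subset_w_closure[OF vs] unfolding w_submodule_def by blast+
  with F assms(1) show ?thesis
    unfolding S_w_finite_def by (intro bexI[of _ 1] exI[of _ F]) auto
qed

text \<open>The w-closure only contains elements of the \<open>K\<close>-span, and \<open>J\<close> cannot provide this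
  (\<open>{0} \<in> GV(D)\<close> when \<open>D\<close> is a field); the nonzero \<open>t\<^sub>0\<close> does.\<close>

lemma w_finite_if_scaled_into_w_finite:
  assumes L: "w_submodule D sc M L"
    and T: "finite T" "t\<^sub>0 \<in> T" "t\<^sub>0 \<noteq> 0" and J: "J \<in> GV D" "J \<subseteq> lspan D (*) T"
    and scaled: "\<forall>t\<in>T. \<exists>F. finite F \<and> F \<subseteq> L \<and> sc t ` L \<subseteq> w_closure D sc (lspan D sc F)"
  shows "w_finite D sc L"
proof -
  obtain Ft where Ft: "\<forall>t\<in>T. finite (Ft t) \<and> Ft t \<subseteq> L \<and> sc t ` L \<subseteq> w_closure D sc (lspan D sc (Ft t))"
    using scaled by (rule bchoice[THEN exE])
  define F where "F = (\<Union>t\<in>T. Ft t)"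
  define N where "N = w_closure D sc (lspan D sc F)"
  have "finite F" "F \<subseteq> L"
    unfolding F_def using T(1) Ft by auto
  have sN: "submodule D sc N"
    unfolding N_def by (rule submodule_w_closure[OF vs submodule_lspan_D[OF vs]])
  have TN: "sc t x \<in> N" if "t \<in> T" "x \<in> L" for t x
  proof -
    have "w_closure D sc (lspan D sc (Ft t)) \<subseteq> N"
      unfolding N_def F_def using that(1) by (intro w_closure_mono lspan_mono) blast
    then show ?thesis
      using Ft that by blast
  qed
  have "L \<subseteq> N"
  proof
    fix x
    assume "x \<in> L"
    have "lspan D (*) T \<subseteq> {j. sc j x \<in> N}"
      using TN \<open>x \<in> L\<close> by (intro lspan_subset_submodule[OF submodule_multipliers[OF vs sN]]) blast
    then have "x \<in> w_closure D sc N"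
      using in_w_closureI[OF vs T(3) TN[OF T(2) \<open>x \<in> L\<close>] J(1)] J(2) by blast
    then show "x \<in> N"
      unfolding N_def w_closure_idem[OF vs submodule_lspan_D[OF vs]] .
  qed
  then show ?thesis
    unfolding N_def by (rule w_finiteI[OF L \<open>finite F\<close> \<open>F \<subseteq> L\<close>])
qed

lemma S_w_finiteE:
  assumes "S_w_finite D sc S M L" and L: "w_submodule D sc M L"
  obtains s F where "s \<in> S" "finite F" "F \<subseteq> L" "sc s ` L \<subseteq> w_closure D sc (lspan D sc F)"
proof -
  obtain s F where s: "s \<in> S" "finite F" "sc s ` L \<subseteq> w_closure D sc (lspan D sc F)"
    and F_L: "w_closure D sc (lspan D sc F) \<subseteq> w_closure D sc L"
    using assms(1) unfolding S_w_finite_def by blast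
  have "w_closure D sc L = L"
    using L unfolding w_submodule_def w_module_def by blast
  then have "F \<subseteq> L"
    using order_trans[OF subset_w_closure_lspan F_L] by simp
  then show thesis
    by (rule that[OF s(1,2) _ s(3)])
qed

lemma w_finite_if_locally_S_w_finite:
  assumes loc: "\<forall>m. maximal_w_ideal D m \<longrightarrow> P_SM_module D sc m M" and L: "w_submodule D sc M L"
  shows "w_finite D sc L"
proof -
  define T where
    "T = {s \<in> D. \<exists>F. finite F \<and> F \<subseteq> L \<and> sc s ` L \<subseteq> w_closure D sc (lspan D sc F)}"
  have T_meets: "\<exists>t\<in>T. t \<notin> m" if m: "maximal_w_ideal D m" for m
  proof -
    have "S_SM_module D sc (D - m) M"
      using loc m unfolding P_SM_module_def by blast
    then have "S_w_finite D sc (D - m) M L"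
      using L unfolding S_SM_module_def by blast
    then obtain s F where "s \<in> D - m" "finite F" "F \<subseteq> L"
      "sc s ` L \<subseteq> w_closure D sc (lspan D sc F)"
      using L by (rule S_w_finiteE)
    then show ?thesis
      unfolding T_def by blast
  qed
  have "T \<subseteq> D"
    unfolding T_def by blast
  moreover have "\<forall>m. maximal_w_ideal D m \<longrightarrow> \<not> T \<subseteq> m"
    using T_meets by blast
  ultimately obtain T' J where T': "finite T'" "T' \<subseteq> T" and J: "J \<in> GV D" "J \<subseteq> lspan D (*) T'"
    by (rule GV_subset_lspan_of_finite_subset)
  obtain m\<^sub>0 where m\<^sub>0: "maximal_w_ideal D m\<^sub>0"
    using ex_maximal_w_ideal by blast
  then obtain t\<^sub>0 where t\<^sub>0: "t\<^sub>0 \<in> T" "t\<^sub>0 \<notin> m\<^sub>0"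
    using T_meets by blast
  have "0 \<in> m\<^sub>0"
    using m\<^sub>0 unfolding maximal_w_ideal_def w_ideal_def is_ideal_def submodule_def by blast
  with t\<^sub>0(2) have "t\<^sub>0 \<noteq> 0"
    by blast
  moreover have "finite (insert t\<^sub>0 T')"
    using T'(1) by simp
  moreover have "J \<subseteq> lspan D (*) (insert t\<^sub>0 T')"
    using J(2) lspan_mono[of T' "insert t\<^sub>0 T'" D "(*)"] by blast
  moreover have "\<forall>t\<in>insert t\<^sub>0 T'. \<exists>F. finite F \<and> F \<subseteq> L \<and> sc t ` L \<subseteq> w_closure D sc (lspan D sc F)"
    using T'(2) t\<^sub>0(1) unfolding T_def by blast
  ultimately show ?thesis
    using w_finite_if_scaled_into_w_finite[OF L _ insertI1 _ J(1)] by blast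
qed

end

end

theorem proposition3p4:
  fixes D :: "'k::field set" and sc :: "'k \<Rightarrow> 'v::ab_group_add \<Rightarrow> 'v" and M :: "'v set"
  assumes "domain_with_qf D"
    and "vector_space sc"
    and "submodule D sc M"
    and "w_module D sc M"
  shows "(SM_module D sc M \<longleftrightarrow> (\<forall>P. prime_w_ideal D P \<longrightarrow> P_SM_module D sc P M))
       \<and> (SM_module D sc M \<longleftrightarrow> (\<forall>m. maximal_w_ideal D m \<longrightarrow> P_SM_module D sc m M))"
proof -
  interpret domain_qf D
    using assms(1) by (rule domain_qf.intro)
  note vs = assms(2)
  have SM_iff: "SM_module D sc M \<longleftrightarrow> (\<forall>L. w_submodule D sc M L \<longrightarrow> w_finite D sc L)"
    by (rule SM_module_iff_w_finite[OF vs assms(4)])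
  have prime: "P_SM_module D sc P M" if SM: "SM_module D sc M" and P: "prime_w_ideal D P" for P
    unfolding P_SM_module_def S_SM_module_def
    using S_w_finite_if_w_finite[OF vs one_mem_complement_of_prime_w_ideal[OF P]] SM SM_iff
    by blast
  have maximal: "SM_module D sc M" if "\<forall>m. maximal_w_ideal D m \<longrightarrow> P_SM_module D sc m M"
    unfolding SM_iff using w_finite_if_locally_S_w_finite[OF vs that] by blast
  show ?thesis
    using prime maximal maximal_w_ideal_prime by blast
qed

end
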